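(* Let $n$ be a positive integer and let $\mathcal F$ be an $\mathcal N$-saturated family of subsets of $[n]$. Let $A,B,C,D\in\mathcal F$ be distinct sets forming an induced butterfly with maximal elements $A,B$, i.e. $C\subset A$, $C\subset B$, $D\subset A$, $D\subset B$, $A,B$ are incomparable and $C,D$ are incomparable. Then there exists $M\in\mathcal F$ such that $C\cup D\subseteq M\subseteq A\cap B$.
   Context: The poset $\mathcal N$ has four elements $a,b,c,d$ with $a<c$, $b<c$, $b<d$ and no other comparabilities. A family $\mathcal Q$ of sets (ordered by inclusion) contains an induced copy of $\mathcal N$ if there are distinct sets in $\mathcal Q$ whose inclusion relations are exactly those of $a,b,c,d$ above. A family $\mathcal F$ of subsets of $[n]=\{1,\dots,n\}$ is $\mathcal N$-saturated if $\mathcal F$ contains no induced copy of $\mathcal N$, but for every $S\subseteq[n]$ with $S\notin\mathcal F$, the family $\mathcal F\cup\{S\}$ contains an induced copy of $\mathcal N$. *)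

theory Defs
  imports Main
begin

definition incomparable :: "'a set \<Rightarrow> 'a set \<Rightarrow> bool" where
  "incomparable X Y \<longleftrightarrow> \<not> X \<subseteq> Y \<and> \<not> Y \<subseteq> X"

definition induced_N :: "'a set \<Rightarrow> 'a set \<Rightarrow> 'a set \<Rightarrow> 'a set \<Rightarrow> bool" where
  "induced_N a b c d \<longleftrightarrow>
     distinct [a, b, c, d] \<and>
     a \<subset> c \<and> b \<subset> c \<and> b \<subset> d \<and>
     incomparable a b \<and> incomparable a d \<and> incomparable c d"

definition contains_induced_N :: "'a set set \<Rightarrow> bool" where
  "contains_induced_N Q \<longleftrightarrow>
     (\<exists>a\<in>Q. \<exists>b\<in>Q. \<exists>c\<in>Q. \<exists>d\<in>Q. induced_N a b c d)"

definition N_saturated :: "nat \<Rightarrow> nat set set \<Rightarrow> bool" where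
  "N_saturated n F \<longleftrightarrow>
     F \<subseteq> Pow {1..n} \<and> \<not> contains_induced_N F \<and>
     (\<forall>S. S \<subseteq> {1..n} \<longrightarrow> S \<notin> F \<longrightarrow> contains_induced_N (insert S F))"

end

theory Submission
  imports Defs
begin

text \<open>Let \<open>S\<close> be the union of all members of \<open>F\<close> lying below \<open>A \<inter> B\<close>. Every point of \<open>S\<close>
  is covered by a member of \<open>F\<close> below \<open>S\<close>, and every member of \<open>F\<close> not below \<open>S\<close> is
  not below \<open>A\<close> or not below \<open>B\<close>, both of which lie above \<open>S\<close>. So in any induced copy of
  \<open>\<N>\<close> in \<open>F \<union> {S}\<close> that uses \<open>S\<close>, the set \<open>S\<close> can be replaced by a member of \<open>F\<close> below
  it (if \<open>S\<close> is a minimal element of the copy) or above it (if \<open>S\<close> is maximal), giving a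
  copy of \<open>\<N>\<close> inside \<open>F\<close>. By saturation \<open>S \<in> F\<close>, and \<open>M = S\<close> works.\<close>

lemma induced_N_iff:
  "induced_N a b c d \<longleftrightarrow>
     a \<subset> c \<and> b \<subset> c \<and> b \<subset> d \<and> incomparable a b \<and> incomparable a d \<and> incomparable c d"
  unfolding induced_N_def incomparable_def by auto

lemma induced_N_replace_first:
  "induced_N a b c d \<Longrightarrow> E \<subseteq> a \<Longrightarrow> \<not> E \<subseteq> d \<Longrightarrow> induced_N E b c d"
  unfolding induced_N_iff incomparable_def
  by (metis subset_trans psubset_imp_subset subset_psubset_trans psubset_subset_trans)

lemma induced_N_replace_second:
  "induced_N a b c d \<Longrightarrow> E \<subseteq> b \<Longrightarrow> \<not> E \<subseteq> a \<Longrightarrow> induced_N a E c d"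
  unfolding induced_N_iff incomparable_def
  by (metis subset_trans psubset_imp_subset subset_psubset_trans psubset_subset_trans)

lemma induced_N_replace_third:
  "induced_N a b c d \<Longrightarrow> c \<subseteq> Y \<Longrightarrow> \<not> d \<subseteq> Y \<Longrightarrow> induced_N a b Y d"
  unfolding induced_N_iff incomparable_def
  by (metis subset_trans psubset_imp_subset subset_psubset_trans psubset_subset_trans)

lemma induced_N_replace_fourth:
  "induced_N a b c d \<Longrightarrow> d \<subseteq> Y \<Longrightarrow> \<not> a \<subseteq> Y \<Longrightarrow> induced_N a b c Y"
  unfolding induced_N_iff incomparable_def
  by (metis subset_trans psubset_imp_subset subset_psubset_trans psubset_subset_trans)

lemma not_contains_induced_N_insert:
  assumes no_N: "\<not> contains_induced_N F"
    and below: "\<And>Z. \<not> S \<subseteq> Z \<Longrightarrow> \<exists>E\<in>F. E \<subseteq> S \<and> \<not> E \<subseteq> Z"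
    and above: "\<And>Z. Z \<in> F \<Longrightarrow> \<not> Z \<subseteq> S \<Longrightarrow> \<exists>Y\<in>F. S \<subseteq> Y \<and> \<not> Z \<subseteq> Y"
  shows "\<not> contains_induced_N (insert S F)"
proof
  assume "contains_induced_N (insert S F)"
  then obtain a b c d where mem: "a \<in> insert S F" "b \<in> insert S F" "c \<in> insert S F" "d \<in> insert S F"
    and N: "induced_N a b c d"
    unfolding contains_induced_N_def by blast
  have no_N_in_F: "\<not> induced_N a' b' c' d'" if "a' \<in> F" "b' \<in> F" "c' \<in> F" "d' \<in> F" for a' b' c' d'
    using no_N that unfolding contains_induced_N_def by blast
  have dist: "distinct [a, b, c, d]"
    using N unfolding induced_N_def by blast
  have not_sub: "\<not> a \<subseteq> d" "\<not> b \<subseteq> a" "\<not> d \<subseteq> c"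
    using N unfolding induced_N_iff incomparable_def by blast+
  consider "a = S" | "b = S" | "c = S" | "d = S" | "a \<in> F" "b \<in> F" "c \<in> F" "d \<in> F"
    using mem by blast
  then show False
  proof cases
    case 1
    then have "b \<in> F" "c \<in> F" "d \<in> F" using mem dist by auto
    moreover obtain E where "E \<in> F" "E \<subseteq> a" "\<not> E \<subseteq> d"
      using below not_sub 1 by blast
    ultimately show False using no_N_in_F induced_N_replace_first[OF N] by blast
  next
    case 2
    then have "a \<in> F" "c \<in> F" "d \<in> F" using mem dist by auto
    moreover obtain E where "E \<in> F" "E \<subseteq> b" "\<not> E \<subseteq> a"
      using below not_sub 2 by blast
    ultimately show False using no_N_in_F induced_N_replace_second[OF N] by blast
  next
    case 3
    then have "a \<in> F" "b \<in> F" "d \<in> F" using mem dist by auto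
    moreover obtain Y where "Y \<in> F" "c \<subseteq> Y" "\<not> d \<subseteq> Y"
      using above \<open>d \<in> F\<close> not_sub 3 by blast
    ultimately show False using no_N_in_F induced_N_replace_third[OF N] by blast
  next
    case 4
    then have "a \<in> F" "b \<in> F" "c \<in> F" using mem dist by auto
    moreover obtain Y where "Y \<in> F" "d \<subseteq> Y" "\<not> a \<subseteq> Y"
      using above \<open>a \<in> F\<close> not_sub 4 by blast
    ultimately show False using no_N_in_F induced_N_replace_fourth[OF N] by blast
  next
    case 5
    then show False using no_N_in_F N by blast
  qed
qed

lemma N_saturated_Union_below_Inter_mem:
  assumes sat: "N_saturated n F" and "G \<subseteq> F"
  shows "\<Union>{E\<in>F. E \<subseteq> \<Inter>G} \<in> F"
proof (rule ccontr)
  define S where "S = \<Union>{E\<in>F. E \<subseteq> \<Inter>G}"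
  assume "S \<notin> F"
  have "F \<subseteq> Pow {1..n}"
    using sat unfolding N_saturated_def by simp
  then have "S \<subseteq> {1..n}"
    unfolding S_def by auto
  with sat \<open>S \<notin> F\<close> have "contains_induced_N (insert S F)"
    unfolding N_saturated_def by simp
  moreover have "\<not> contains_induced_N (insert S F)"
  proof (rule not_contains_induced_N_insert)
    show "\<not> contains_induced_N F"
      using sat unfolding N_saturated_def by simp
    show "\<exists>E\<in>F. E \<subseteq> S \<and> \<not> E \<subseteq> Z" if "\<not> S \<subseteq> Z" for Z
      using that unfolding S_def by auto
    show "\<exists>Y\<in>F. S \<subseteq> Y \<and> \<not> Z \<subseteq> Y" if "Z \<in> F" "\<not> Z \<subseteq> S" for Z
    proof -
      have "\<not> Z \<subseteq> \<Inter>G"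
        using that unfolding S_def by auto
      then obtain Y where "Y \<in> G" "\<not> Z \<subseteq> Y"
        by auto
      moreover have "S \<subseteq> Y"
        using \<open>Y \<in> G\<close> unfolding S_def by auto
      ultimately show ?thesis
        using \<open>G \<subseteq> F\<close> by auto
    qed
  qed
  ultimately show False by simp
qed

theorem corollary2p4:
  fixes n :: nat and F :: "nat set set" and A B C D :: "nat set"
  assumes "n \<ge> 1"
    and "N_saturated n F"
    and "A \<in> F" "B \<in> F" "C \<in> F" "D \<in> F"
    and "distinct [A, B, C, D]"
    and "C \<subset> A" "C \<subset> B" "D \<subset> A" "D \<subset> B"
    and "incomparable A B" "incomparable C D"
  shows "\<exists>M\<in>F. C \<union> D \<subseteq> M \<and> M \<subseteq> A \<inter> B"
proof
  let ?M = "\<Union>{E\<in>F. E \<subseteq> \<Inter>{A, B}}"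
  show "?M \<in> F"
    using assms(2-4) by (intro N_saturated_Union_below_Inter_mem) auto
  show "C \<union> D \<subseteq> ?M \<and> ?M \<subseteq> A \<inter> B"
    using assms(5,6,8-11) by auto
qed

end
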